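(* Let $m\in\mathbb Z_+$ and let $J_1\sqcup\cdots\sqcup J_\ell$ be a partition of $[m]$ such that each $J_k$ is a set of contiguous integers and every element of $J_k$ precedes every element of $J_{k+1}$. Let $a_k=\min J_k$, $b_k=\max J_k$, $m_k=|J_k|$. Let $A\in[0,1]^{n\times m}$ have non-decreasing rows and non-decreasing columns, and suppose $\sum_{i=1}^n(A_{i,b_k}-A_{i,a_k})\le\chi$ for each $k\in[\ell]$ and some $\chi\ge0$. Suppose further that there are positive reals $\rho,\rho_1,\dots,\rho_\ell$ and a permutation $\pi$ of $[n]$ such that for every $i\in[n]$: (i) $\sum_{j=1}^m|A_{\pi(i),j}-A_{i,j}|\le\rho$, and (ii) $\sum_{j\in J_k}|A_{\pi(i),j}-A_{i,j}|\le\rho_k$ for each $k\in[\ell]$. Then \[ \sum_{i=1}^n\sum_{j=1}^m(A_{\pi(i),j}-A_{i,j})^2\le2\chi\sum_{k=1}^\ell\rho_k+n\rho\max_{k\in[\ell]}\frac{\rho_k}{m_k}. \] *)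

theory Defs
  imports "HOL-Analysis.Analysis"
begin

end

theory Submission
  imports Defs
begin

text \<open>
  Fix a row i and let d j = A (\<pi> i) j - A i j. On a block J_k both rows are non-decreasing, so d
  oscillates there by at most W i k = w (\<pi> i) k + w i k, where w i k = A i b_k - A i a_k.
  Comparing |d j| with the average of |d| over J_k gives |d j| \<le> \<rho>_k / m_k + W i k, hence the
  sum of (d j)^2 over J_k is at most (\<rho>_k / m_k) \<Sum>_{J_k} |d| + \<rho>_k W i k. Summing over the
  blocks bounds the row by \<rho> max_k (\<rho>_k / m_k) + \<Sum>_k \<rho>_k W i k; summing over the rows,
  \<Sum>_i W i k = 2 \<Sum>_i w i k \<le> 2 \<chi> because \<pi> is a permutation.
\<close>

lemma abs_diff_le_of_mono_on_interval:
  fixes g :: "'a::linorder \<Rightarrow> 'b::linordered_idom"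
  assumes "mono_on {a..b} g" "x \<in> {a..b}" "y \<in> {a..b}"
  shows "\<bar>g x - g y\<bar> \<le> g b - g a"
proof -
  have "g a \<le> g x" "g x \<le> g b" "g a \<le> g y" "g y \<le> g b"
    using assms by (auto intro!: mono_onD[OF assms(1)])
  then show ?thesis
    by (simp add: abs_le_iff)
qed

lemma abs_diff_diff_le_of_mono_on_interval:
  fixes f g :: "'a::linorder \<Rightarrow> 'b::linordered_idom"
  assumes "mono_on {a..b} f" "mono_on {a..b} g" "x \<in> {a..b}" "y \<in> {a..b}"
  shows "\<bar>(f x - g x) - (f y - g y)\<bar> \<le> (f b - f a) + (g b - g a)"
  using abs_diff_le_of_mono_on_interval[OF assms(1,3,4)] abs_diff_le_of_mono_on_interval[OF assms(2,3,4)]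
  by (simp add: abs_le_iff)

lemma abs_le_average_plus_oscillation:
  fixes f :: "'a \<Rightarrow> real"
  assumes "finite S" "x \<in> S" and osc: "\<forall>y\<in>S. \<forall>z\<in>S. \<bar>f y - f z\<bar> \<le> c"
  shows "\<bar>f x\<bar> \<le> (\<Sum>y\<in>S. \<bar>f y\<bar>) / card S + c"
proof -
  have card_pos: "real (card S) > 0"
    using assms(1,2) card_gt_0_iff by fastforce
  have "\<bar>f x\<bar> \<le> \<bar>f y\<bar> + c" if "y \<in> S" for y
    using osc assms(2) that by fastforce
  then have "(\<Sum>y\<in>S. \<bar>f x\<bar>) \<le> (\<Sum>y\<in>S. \<bar>f y\<bar> + c)"
    by (rule sum_mono)
  then have "card S * \<bar>f x\<bar> \<le> (\<Sum>y\<in>S. \<bar>f y\<bar>) + card S * c"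
    by (simp add: sum.distrib)
  with card_pos show ?thesis
    by (simp add: field_simps)
qed

lemma sum_squares_le_of_oscillation:
  fixes f :: "'a \<Rightarrow> real"
  assumes "finite S" "S \<noteq> {}"
    and osc: "\<forall>y\<in>S. \<forall>z\<in>S. \<bar>f y - f z\<bar> \<le> c"
    and l1: "(\<Sum>x\<in>S. \<bar>f x\<bar>) \<le> r"
  shows "(\<Sum>x\<in>S. (f x)\<^sup>2) \<le> (\<Sum>x\<in>S. \<bar>f x\<bar>) * (r / card S) + r * c"
proof -
  have c_nonneg: "0 \<le> c"
    using osc assms(2) by fastforce
  have "(f x)\<^sup>2 \<le> \<bar>f x\<bar> * (r / card S + c)" if "x \<in> S" for x
  proof -
    have "\<bar>f x\<bar> \<le> (\<Sum>y\<in>S. \<bar>f y\<bar>) / card S + c"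
      using abs_le_average_plus_oscillation[OF assms(1) that osc] .
    also have "\<dots> \<le> r / card S + c"
      using l1 by (simp add: divide_right_mono)
    finally have "\<bar>f x\<bar> * \<bar>f x\<bar> \<le> \<bar>f x\<bar> * (r / card S + c)"
      by (rule mult_left_mono) simp
    then show ?thesis
      by (simp add: power2_eq_square)
  qed
  then have "(\<Sum>x\<in>S. (f x)\<^sup>2) \<le> (\<Sum>x\<in>S. \<bar>f x\<bar> * (r / card S + c))"
    by (rule sum_mono)
  also have "\<dots> = (\<Sum>x\<in>S. \<bar>f x\<bar>) * (r / card S) + (\<Sum>x\<in>S. \<bar>f x\<bar>) * c"
    by (simp add: distrib_left sum.distrib sum_distrib_right sum_divide_distrib)
  also have "\<dots> \<le> (\<Sum>x\<in>S. \<bar>f x\<bar>) * (r / card S) + r * c"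
    using l1 c_nonneg by (simp add: mult_right_mono)
  finally show ?thesis .
qed

lemma sum_squares_le_of_blockwise_oscillation:
  fixes h :: "'a \<Rightarrow> real" and B :: "'k \<Rightarrow> 'a set"
  assumes "finite K" and blocks: "\<forall>k\<in>K. finite (B k) \<and> B k \<noteq> {}"
    and disj: "\<forall>k\<in>K. \<forall>k'\<in>K. k \<noteq> k' \<longrightarrow> B k \<inter> B k' = {}"
    and osc: "\<forall>k\<in>K. \<forall>y\<in>B k. \<forall>z\<in>B k. \<bar>h y - h z\<bar> \<le> c k"
    and l1: "\<forall>k\<in>K. (\<Sum>x\<in>B k. \<bar>h x\<bar>) \<le> r k"
    and M: "\<forall>k\<in>K. r k / card (B k) \<le> M"
  shows "(\<Sum>x\<in>(\<Union>k\<in>K. B k). (h x)\<^sup>2)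
    \<le> M * (\<Sum>x\<in>(\<Union>k\<in>K. B k). \<bar>h x\<bar>) + (\<Sum>k\<in>K. r k * c k)"
proof -
  have split: "(\<Sum>x\<in>(\<Union>k\<in>K. B k). g x) = (\<Sum>k\<in>K. \<Sum>x\<in>B k. g x)" for g :: "'a \<Rightarrow> real"
    using assms(1) blocks disj by (intro sum.UNION_disjoint) auto
  have block: "(\<Sum>x\<in>B k. (h x)\<^sup>2) \<le> M * (\<Sum>x\<in>B k. \<bar>h x\<bar>) + r k * c k" if "k \<in> K" for k
  proof -
    have "(\<Sum>x\<in>B k. (h x)\<^sup>2) \<le> (\<Sum>x\<in>B k. \<bar>h x\<bar>) * (r k / card (B k)) + r k * c k"
      using that blocks osc l1 by (intro sum_squares_le_of_oscillation) auto
    also have "\<dots> \<le> M * (\<Sum>x\<in>B k. \<bar>h x\<bar>) + r k * c k"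
      using mult_left_mono[OF M[rule_format, OF that], of "\<Sum>x\<in>B k. \<bar>h x\<bar>"]
      by (simp add: sum_nonneg mult.commute)
    finally show ?thesis .
  qed
  have "(\<Sum>k\<in>K. \<Sum>x\<in>B k. (h x)\<^sup>2) \<le> (\<Sum>k\<in>K. M * (\<Sum>x\<in>B k. \<bar>h x\<bar>) + r k * c k)"
    using block by (rule sum_mono)
  then show ?thesis
    unfolding split by (simp add: sum.distrib sum_distrib_left)
qed

lemma sum_permutes_add_self:
  fixes g :: "'a \<Rightarrow> 'k \<Rightarrow> real"
  assumes "p permutes S"
  shows "(\<Sum>i\<in>S. \<Sum>k\<in>K. r k * (g (p i) k + g i k)) = 2 * (\<Sum>k\<in>K. r k * (\<Sum>i\<in>S. g i k))"
proof -
  have perm: "(\<Sum>i\<in>S. g (p i) k) = (\<Sum>i\<in>S. g i k)" for k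
    using sum.permute[OF assms, of "\<lambda>i. g i k"] by (simp add: comp_def)
  have "(\<Sum>i\<in>S. \<Sum>k\<in>K. r k * (g (p i) k + g i k))
      = (\<Sum>k\<in>K. r k * ((\<Sum>i\<in>S. g (p i) k) + (\<Sum>i\<in>S. g i k)))"
    by (subst sum.swap) (simp add: distrib_left sum_distrib_left sum.distrib)
  also have "\<dots> = 2 * (\<Sum>k\<in>K. r k * (\<Sum>i\<in>S. g i k))"
    unfolding perm by (simp add: sum_distrib_left mult_ac flip: mult_2)
  finally show ?thesis .
qed

theorem lemma12:
  fixes m n L :: nat
    and J :: "nat \<Rightarrow> nat set"
    and A :: "nat \<Rightarrow> nat \<Rightarrow> real"
    and chi rho :: real
    and rhok :: "nat \<Rightarrow> real"
    and p :: "nat \<Rightarrow> nat"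
  assumes m_pos: "m \<ge> 1"
    and J_nonempty: "\<forall>k\<in>{1..L}. J k \<noteq> {}"
    and J_cover: "(\<Union>k\<in>{1..L}. J k) = {1..m}"
    and J_disj: "\<forall>k\<in>{1..L}. \<forall>k'\<in>{1..L}. k \<noteq> k' \<longrightarrow> J k \<inter> J k' = {}"
    and J_contig: "\<forall>k\<in>{1..L}. J k = {Min (J k)..Max (J k)}"
    and J_ordered: "\<forall>k\<in>{1..<L}. \<forall>x\<in>J k. \<forall>y\<in>J (k + 1). x < y"
    and A_range: "\<forall>i\<in>{1..n}. \<forall>j\<in>{1..m}. 0 \<le> A i j \<and> A i j \<le> 1"
    and A_rows: "\<forall>i\<in>{1..n}. \<forall>j\<in>{1..m}. \<forall>j'\<in>{1..m}. j \<le> j' \<longrightarrow> A i j \<le> A i j'"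
    and A_cols: "\<forall>j\<in>{1..m}. \<forall>i\<in>{1..n}. \<forall>i'\<in>{1..n}. i \<le> i' \<longrightarrow> A i j \<le> A i' j"
    and chi_nonneg: "chi \<ge> 0"
    and chi_bound: "\<forall>k\<in>{1..L}. (\<Sum>i=1..n. A i (Max (J k)) - A i (Min (J k))) \<le> chi"
    and rho_pos: "rho > 0"
    and rhok_pos: "\<forall>k\<in>{1..L}. rhok k > 0"
    and pi_perm: "p permutes {1..n}"
    and cond_i: "\<forall>i\<in>{1..n}. (\<Sum>j=1..m. \<bar>A (p i) j - A i j\<bar>) \<le> rho"
    and cond_ii: "\<forall>i\<in>{1..n}. \<forall>k\<in>{1..L}. (\<Sum>j\<in>J k. \<bar>A (p i) j - A i j\<bar>) \<le> rhok k"
  shows "(\<Sum>i=1..n. \<Sum>j=1..m. (A (p i) j - A i j)^2)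
         \<le> 2 * chi * (\<Sum>k=1..L. rhok k)
           + real n * rho * Max ((\<lambda>k. rhok k / real (card (J k))) ` {1..L})"
proof -
  define w where "w i k = A i (Max (J k)) - A i (Min (J k))" for i k
  define M where "M = Max ((\<lambda>k. rhok k / real (card (J k))) ` {1..L})"
  have J_sub: "J k \<subseteq> {1..m}" if "k \<in> {1..L}" for k
    using J_cover that by blast
  have J_fin: "finite (J k)" if "k \<in> {1..L}" for k
    using finite_subset[OF J_sub[OF that]] by simp
  have M_ge: "\<forall>k\<in>{1..L}. rhok k / card (J k) \<le> M"
    unfolding M_def by simp
  have "1 \<in> {1..L}"
    using J_cover m_pos by (cases L) auto
  with M_ge rhok_pos have M_nonneg: "0 \<le> M"
    by (meson divide_nonneg_nonneg less_imp_le of_nat_0_le_iff order.trans)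
  have mono: "mono_on {Min (J k)..Max (J k)} (A i)" if "i \<in> {1..n}" "k \<in> {1..L}" for i k
    using A_rows J_sub J_contig that by (intro mono_onI) blast
  have row: "(\<Sum>j=1..m. (A (p i) j - A i j)\<^sup>2) \<le> M * rho + (\<Sum>k=1..L. rhok k * (w (p i) k + w i k))"
    if i: "i \<in> {1..n}" for i
  proof -
    have "\<forall>k\<in>{1..L}. \<forall>y\<in>J k. \<forall>z\<in>J k.
        \<bar>(A (p i) y - A i y) - (A (p i) z - A i z)\<bar> \<le> w (p i) k + w i k"
      using abs_diff_diff_le_of_mono_on_interval[OF mono mono] permutes_in_image[OF pi_perm] i J_contig
      unfolding w_def by metis
    then have "(\<Sum>j=1..m. (A (p i) j - A i j)\<^sup>2)
        \<le> M * (\<Sum>j=1..m. \<bar>A (p i) j - A i j\<bar>) + (\<Sum>k=1..L. rhok k * (w (p i) k + w i k))"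
      using sum_squares_le_of_blockwise_oscillation[OF _ _ J_disj _ _ M_ge] J_fin J_nonempty
        cond_ii i unfolding J_cover by simp
    also have "\<dots> \<le> M * rho + (\<Sum>k=1..L. rhok k * (w (p i) k + w i k))"
      using cond_i i M_nonneg by (simp add: mult_left_mono)
    finally show ?thesis .
  qed
  have "(\<Sum>i=1..n. \<Sum>j=1..m. (A (p i) j - A i j)\<^sup>2)
      \<le> (\<Sum>i=1..n. M * rho + (\<Sum>k=1..L. rhok k * (w (p i) k + w i k)))"
    using row by (rule sum_mono)
  also have "\<dots> = n * M * rho + 2 * (\<Sum>k=1..L. rhok k * (\<Sum>i=1..n. w i k))"
    unfolding sum.distrib sum_permutes_add_self[OF pi_perm] by simp
  also have "\<dots> \<le> n * M * rho + 2 * (\<Sum>k=1..L. rhok k * chi)"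
    using chi_bound rhok_pos unfolding w_def
    by (auto intro!: sum_mono mult_left_mono simp: less_imp_le)
  finally show ?thesis
    unfolding M_def by (simp add: sum_distrib_left sum_distrib_right mult_ac)
qed

end
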